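(* Let $G=A(n,\theta)$ with $n\ge3$ odd. For each $x\in G\setminus Z(G)$, the subgroup $[x,G]=\langle x^{-1}g^{-1}xg : g\in G\rangle$ is a maximal subgroup of $Z(G)$ (i.e. of index $2$). Every maximal subgroup of $Z(G)$ is of the form $[x,G]$ for some $x\in G\setminus Z(G)$, and for $x,x'\in G\setminus Z(G)$ we have $[x,G]=[x',G]$ if and only if $xZ(G)=x'Z(G)$.
   Context: Let $n=2m+1$ be odd, $\mathbb{F}_{2^n}$ the field with $2^n$ elements, $\theta$ a generator of $\mathrm{Gal}(\mathbb{F}_{2^n}/\mathbb{F}_2)$, $a^\theta$ the image of $a$ under $\theta$. $G=A(n,\theta)$ is the group of matrices $\begin{bmatrix}1&a&b\\0&1&a^\theta\\0&0&1\end{bmatrix}$, $a,b\in\mathbb{F}_{2^n}$, denoted $(a,b)$, with $(a,b)(c,d)=(a+c,\,b+d+ac^\theta)$. $Z(G)$ is the center of $G$ (an elementary abelian $2$-group of order $2^n$). *)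

theory Defs
  imports "HOL-Algebra.Algebra"
begin

text \<open>Field automorphisms of a field (type-class field), and generators of the
  Galois group Gal(F/F_2) (= the group of all field automorphisms of a finite
  field of characteristic 2).\<close>

definition field_aut :: "('a::field \<Rightarrow> 'a) \<Rightarrow> bool" where
  "field_aut \<sigma> \<longleftrightarrow> bij \<sigma> \<and> (\<forall>x y. \<sigma> (x + y) = \<sigma> x + \<sigma> y) \<and> (\<forall>x y. \<sigma> (x * y) = \<sigma> x * \<sigma> y)"

definition gal_generator :: "('a::field \<Rightarrow> 'a) \<Rightarrow> bool" where
  "gal_generator \<theta> \<longleftrightarrow> field_aut \<theta> \<and> (\<forall>\<sigma>. field_aut \<sigma> \<longrightarrow> (\<exists>k::nat. \<sigma> = (\<theta> ^^ k)))"

text \<open>The group A(n,theta): the matrix [[1,a,b],[0,1,a^theta],[0,0,1]] is written (a,b),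
  with (a,b)(c,d) = (a+c, b+d+a c^theta).\<close>

definition A_grp :: "('a::field \<Rightarrow> 'a) \<Rightarrow> ('a \<times> 'a) monoid" where
  "A_grp \<theta> = \<lparr> carrier = UNIV,
      monoid.mult = (\<lambda>(a, b) (c, d). (a + c, b + d + a * \<theta> c)),
      one = (0, 0) \<rparr>"

definition center :: "('g, 'b) monoid_scheme \<Rightarrow> 'g set" where
  "center G = {z \<in> carrier G. \<forall>g \<in> carrier G. z \<otimes>\<^bsub>G\<^esub> g = g \<otimes>\<^bsub>G\<^esub> z}"

definition comm_sub :: "('g, 'b) monoid_scheme \<Rightarrow> 'g \<Rightarrow> 'g set" where
  "comm_sub G x = generate G {inv\<^bsub>G\<^esub> x \<otimes>\<^bsub>G\<^esub> inv\<^bsub>G\<^esub> g \<otimes>\<^bsub>G\<^esub> x \<otimes>\<^bsub>G\<^esub> g | g. g \<in> carrier G}"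

definition maximal_subgroup_of :: "'g set \<Rightarrow> 'g set \<Rightarrow> ('g, 'b) monoid_scheme \<Rightarrow> bool" where
  "maximal_subgroup_of H K G \<longleftrightarrow> subgroup H G \<and> H \<subseteq> K \<and> H \<noteq> K \<and>
     (\<forall>L. subgroup L G \<and> H \<subseteq> L \<and> L \<subseteq> K \<longrightarrow> L = H \<or> L = K)"

end

theory Submission
  imports Defs "HOL-Number_Theory.Residues" "HOL-Analysis.Analysis"
begin

text \<open>
  Write \<open>x = (a, b)\<close>. The commutator of \<open>x\<close> and \<open>(c, d)\<close> is \<open>(0, f\<^sub>a c)\<close> with
  \<open>f\<^sub>a c = a c\<^sup>\<theta> - c a\<^sup>\<theta>\<close>, an additive map whose kernel \<open>a \<cdot> Fix \<theta> = {0, a}\<close> has two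
  elements. Hence \<open>[x, G] = {0} \<times> im f\<^sub>a\<close> has index 2 in \<open>Z(G) = {0} \<times> F\<close>, and in the
  elementary abelian group \<open>Z(G)\<close> the subgroups of index 2 are exactly the maximal ones.

  Since \<open>f\<^sub>a (a s) = a a\<^sup>\<theta> f\<^sub>1 s\<close>, the image \<open>im f\<^sub>a\<close> is \<open>im f\<^sub>1\<close> scaled by \<open>a a\<^sup>\<theta>\<close>, and a
  subgroup of index 2 is invariant under multiplication by \<open>\<mu> \<noteq> 0\<close> only for \<open>\<mu> = 1\<close>.
  So \<open>im f\<^sub>a = im f\<^sub>a\<^sub>'\<close> forces \<open>u u\<^sup>\<theta> = 1\<close> for \<open>u = a / a'\<close>. Squaring is a power of \<open>\<theta>\<close>,
  so \<open>u\<^sup>2 \<in> {u, u\<^sup>-\<^sup>1}\<close> and \<open>u\<^sup>3 = 1\<close>; as \<open>3\<close> does not divide \<open>2\<^sup>n - 1\<close> for odd \<open>n\<close>,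
  \<open>u = 1\<close>. Thus \<open>a \<mapsto> im f\<^sub>a\<close> injects \<open>F\<^sup>\<times>\<close> into the subgroups of index 2 of \<open>(F, +)\<close>;
  there are at most \<open>2\<^sup>n - 1\<close> of them, because their \<open>\<plusminus>1\<close>-characters are orthogonal in
  \<open>\<real>\<^sup>F\<close>, so every maximal subgroup of \<open>Z(G)\<close> is some \<open>[x, G]\<close>.
\<close>

lemma field_aut_add: "field_aut t \<Longrightarrow> t (x + y) = t x + t y"
  by (simp add: field_aut_def)

lemma field_aut_mult: "field_aut t \<Longrightarrow> t (x * y) = t x * t y"
  by (simp add: field_aut_def)

lemma field_aut_inj: "field_aut t \<Longrightarrow> t x = t y \<longleftrightarrow> x = y"
  by (auto simp: field_aut_def bij_def inj_def)

lemma field_aut_0 [simp]: "field_aut t \<Longrightarrow> t 0 = 0"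
  by (metis add.right_neutral add_left_cancel field_aut_add)

lemma field_aut_eq_0_iff: "field_aut t \<Longrightarrow> t x = 0 \<longleftrightarrow> x = 0"
  using field_aut_inj[of t x 0] by simp

lemma field_aut_minus: "field_aut t \<Longrightarrow> t (- x) = - t x"
  using field_aut_add[of t x "- x"] by (simp add: eq_neg_iff_add_eq_0 add.commute)

lemma field_aut_diff: "field_aut t \<Longrightarrow> t (x - y) = t x - t y"
  unfolding diff_conv_add_uminus by (simp only: field_aut_add field_aut_minus)

lemma field_aut_1 [simp]: "field_aut t \<Longrightarrow> t 1 = 1"
  by (metis field_aut_mult field_aut_eq_0_iff mult_1_right mult_cancel_left zero_neq_one)

lemma field_aut_inverse: "field_aut t \<Longrightarrow> t (inverse x) = inverse (t x)"
  by (metis field_aut_1 field_aut_mult field_aut_0 inverse_unique inverse_zero right_inverse)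

lemma field_aut_divide: "field_aut t \<Longrightarrow> t (x / y) = t x / t y"
  by (simp add: divide_inverse field_aut_mult field_aut_inverse)

lemma CHAR_eq_2_if_CARD_eq_power_2:
  assumes "CARD('a::{idom,finite}) = 2 ^ n" and "n > 0"
  shows "CHAR('a) = 2"
proof -
  have prime: "Factorial_Ring.prime CHAR('a)"
    by (simp add: finite_imp_CHAR_pos prime_CHAR_semidom)
  have "CHAR('a) dvd 2 ^ n"
    using CHAR_dvd_CARD[where 'a = 'a] assms(1) by simp
  then have "CHAR('a) dvd 2"
    using prime prime_dvd_power by blast
  then show ?thesis
    using prime primes_dvd_imp_eq two_is_prime_nat by blast
qed

lemma add_self_CHAR_2: "CHAR('a::ring_1) = 2 \<Longrightarrow> (x::'a) + x = 0"
  by (metis uminus_CHAR_2 add.right_inverse)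

lemma field_power_card_minus_one:
  fixes x :: "'a::{field,finite}"
  assumes "x \<noteq> 0"
  shows "x ^ (CARD('a) - 1) = 1"
proof -
  have "(\<Prod>y\<in>UNIV - {0}. y) = (\<Prod>y\<in>UNIV - {0}. x * y)"
    by (rule prod.reindex_bij_witness[of _ "\<lambda>y. x * y" "\<lambda>y. y / x"]) (use assms in auto)
  also have "\<dots> = x ^ (CARD('a) - 1) * (\<Prod>y\<in>UNIV - {0}. y)"
    by (simp add: prod.distrib card_Diff_singleton)
  finally show ?thesis
    by simp
qed

lemma field_aut_square:
  assumes "CHAR('a::{field,finite}) = 2"
  shows "field_aut (\<lambda>x::'a. x ^ 2)"
proof -
  have add: "(x + y) ^ 2 = x ^ 2 + y ^ 2" for x y :: 'a
    using freshmans_dream[where x = x and y = y] assms by simp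
  have "inj (\<lambda>x::'a. x ^ 2)"
  proof (rule injI)
    fix x y :: 'a
    assume "x ^ 2 = y ^ 2"
    then have "(x + y) ^ 2 = (y + y) ^ 2"
      by (simp only: add)
    then have "x + y = 0"
      using add_self_CHAR_2[OF assms] by simp
    then show "x = y"
      using uminus_CHAR_2[OF assms] by (metis add_eq_0_iff2)
  qed
  then have "bij (\<lambda>x::'a. x ^ 2)"
    by (simp add: bij_def finite_UNIV_inj_surj)
  then show ?thesis
    unfolding field_aut_def using add by (simp add: power_mult_distrib)
qed

lemma gal_generator_fixed_iff:
  fixes t :: "'a::{field,finite} \<Rightarrow> 'a"
  assumes "CHAR('a) = 2" and "gal_generator t"
  shows "t c = c \<longleftrightarrow> c = 0 \<or> c = 1"
proof
  assume fixed: "t c = c"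
  obtain k where "(\<lambda>x::'a. x ^ 2) = t ^^ k"
    using assms field_aut_square unfolding gal_generator_def by blast
  moreover have "(t ^^ m) c = c" for m
    by (induction m) (simp_all add: fixed)
  ultimately have "c * c = c * 1"
    by (metis power2_eq_square mult_1_right)
  then show "c = 0 \<or> c = 1"
    by (metis mult_left_cancel)
qed (use assms in \<open>auto simp: gal_generator_def\<close>)

lemma gal_generator_neq_id:
  fixes t :: "'a::{field,finite} \<Rightarrow> 'a"
  assumes "CHAR('a) = 2" and "gal_generator t" and "CARD('a) > 2"
  shows "t \<noteq> id"
proof
  assume "t = id"
  then have "UNIV \<subseteq> {0, 1::'a}"
    using gal_generator_fixed_iff[OF assms(1,2)] by auto
  then have "CARD('a) \<le> card {0, 1::'a}"
    by (intro card_mono) auto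
  then show False
    using assms(3) by simp
qed

lemma odd_power_two_mod_three:
  assumes "odd n"
  shows "(2::nat) ^ n mod 3 = 2"
proof -
  obtain m where n: "n = 2 * m + 1"
    using assms oddE by blast
  have "(4::nat) ^ m mod 3 = 1"
    using power_mod[of "4::nat" 3 m] by simp
  then have "(2 * 4 ^ m) mod 3 = (2::nat)"
    using mod_mult_right_eq[of 2 "4 ^ m" "3::nat"] by simp
  moreover have "(2::nat) ^ n = 2 * 4 ^ m"
    unfolding n by (simp add: power_mult)
  ultimately show ?thesis
    by simp
qed

lemma gal_generator_norm_eq_1:
  fixes t :: "'a::{field,finite} \<Rightarrow> 'a"
  assumes card: "CARD('a) = 2 ^ n" and "odd n" and gen: "gal_generator t"
    and norm: "t u * u = 1"
  shows "u = 1"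
proof -
  have char: "CHAR('a) = 2"
    using CHAR_eq_2_if_CARD_eq_power_2[OF card] \<open>odd n\<close> by (simp add: odd_pos)
  have aut: "field_aut t"
    using gen gal_generator_def by blast
  have u: "u \<noteq> 0"
    using norm by auto
  have tu: "t u = inverse u"
    using norm by (simp add: inverse_unique mult.commute)
  obtain k where "(\<lambda>x::'a. x ^ 2) = t ^^ k"
    using gen field_aut_square[OF char] unfolding gal_generator_def by blast
  moreover have "(t ^^ m) u \<in> {u, inverse u}" for m
    by (induction m) (auto simp: tu field_aut_inverse[OF aut])
  ultimately have "u ^ 2 = u \<or> u ^ 2 = inverse u"
    by (metis insert_iff singletonD)
  then show ?thesis
  proof
    assume "u ^ 2 = u"
    then show ?thesis
      using u by (simp add: power2_eq_square)
  next
    assume "u ^ 2 = inverse u"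
    then have cube: "u ^ 3 = 1"
      using u by (simp add: power2_eq_square power3_eq_cube)
    define q where "q = ((2::nat) ^ n - 1) div 3"
    have "(2::nat) ^ n - 1 = 3 * q + 1"
      using odd_power_two_mod_three[OF \<open>odd n\<close>] unfolding q_def by presburger
    then have "u ^ (2 ^ n - 1) = u"
      by (simp add: power_add power_mult cube)
    then show ?thesis
      using field_power_card_minus_one[OF u] card by simp
  qed
qed

definition add_subgroup :: "'a::ab_group_add set \<Rightarrow> bool" where
  "add_subgroup S \<longleftrightarrow> 0 \<in> S \<and> (\<forall>x\<in>S. \<forall>y\<in>S. x - y \<in> S)"

lemma add_subgroup_0: "add_subgroup S \<Longrightarrow> 0 \<in> S"
  by (simp add: add_subgroup_def)

lemma add_subgroup_diff: "add_subgroup S \<Longrightarrow> x \<in> S \<Longrightarrow> y \<in> S \<Longrightarrow> x - y \<in> S"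
  by (simp add: add_subgroup_def)

lemma add_subgroup_minus: "add_subgroup S \<Longrightarrow> x \<in> S \<Longrightarrow> - x \<in> S"
  using add_subgroup_diff[of S 0 x] by (simp add: add_subgroup_0)

lemma add_subgroup_add: "add_subgroup S \<Longrightarrow> x \<in> S \<Longrightarrow> y \<in> S \<Longrightarrow> x + y \<in> S"
  using add_subgroup_diff[of S x "- y"] by (simp add: add_subgroup_minus)

lemma add_subgroup_range:
  fixes f :: "'a::ab_group_add \<Rightarrow> 'b::ab_group_add"
  assumes "\<And>x y. f (x - y) = f x - f y"
  shows "add_subgroup (range f)"
  unfolding add_subgroup_def
proof (intro conjI ballI)
  show "0 \<in> range f"
    using assms[of 0 0] by (metis diff_self rangeI)
  fix a b assume "a \<in> range f" "b \<in> range f"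
  then show "a - b \<in> range f"
    using assms by (auto simp flip: assms)
qed

text \<open>\<open>H\<close> is a subgroup of index 1 or 2: membership in \<open>H\<close> is a homomorphism to \<open>\<int>/2\<close>.\<close>
definition index_le_two :: "'a::ab_group_add set \<Rightarrow> bool" where
  "index_le_two H \<longleftrightarrow> (\<forall>x y. x - y \<in> H \<longleftrightarrow> (x \<in> H \<longleftrightarrow> y \<in> H))"

lemma index_le_two_imp_add_subgroup: "index_le_two H \<Longrightarrow> add_subgroup H"
  unfolding index_le_two_def add_subgroup_def by (metis diff_self)

lemma index_le_two_UNIV: "index_le_two UNIV"
  by (simp add: index_le_two_def)

lemma index_le_two_if_complement_coset:
  assumes "add_subgroup S" and "u \<notin> S" and "\<And>v. v \<notin> S \<Longrightarrow> v - u \<in> S"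
  shows "index_le_two S"
  unfolding index_le_two_def
proof (intro allI)
  fix x y
  have "x - y \<in> S" if "x \<notin> S" "y \<notin> S"
    using add_subgroup_diff[OF assms(1) assms(3)[OF that(1)] assms(3)[OF that(2)]] by simp
  moreover have "x - y \<notin> S" if "x \<in> S \<longleftrightarrow> y \<notin> S"
    using that add_subgroup_diff[OF assms(1), of x "x - y"] add_subgroup_add[OF assms(1), of "x - y" y]
    by auto
  ultimately show "x - y \<in> S \<longleftrightarrow> (x \<in> S \<longleftrightarrow> y \<in> S)"
    using add_subgroup_diff[OF assms(1)] by blast
qed

lemma index_le_two_if_card_eq:
  fixes S :: "'a::{ab_group_add,finite} set"
  assumes sub: "add_subgroup S" and card: "CARD('a) = 2 * card S"
  shows "index_le_two S"
proof -
  have "S \<noteq> UNIV"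
  proof
    assume "S = UNIV"
    then have "CARD('a) = 0"
      using card by simp
    then show False
      by simp
  qed
  then obtain u where u: "u \<notin> S"
    by blast
  have "u + s \<notin> S" if "s \<in> S" for s
    using u add_subgroup_diff[OF sub _ that, of "u + s"] by auto
  then have "S \<inter> (+) u ` S = {}"
    by blast
  moreover have "card ((+) u ` S) = card S"
    by (simp add: card_image inj_on_def)
  ultimately have "card (S \<union> (+) u ` S) = CARD('a)"
    using card by (simp add: card_Un_disjoint)
  then have "S \<union> (+) u ` S = UNIV"
    using card_subset_eq[of UNIV "S \<union> (+) u ` S"] by simp
  then have "v - u \<in> S" if "v \<notin> S" for v
    using that by force
  then show ?thesis
    using index_le_two_if_complement_coset[OF sub u] by blast
qed

lemma index_le_two_maximal:
  assumes "index_le_two S" and "add_subgroup T" and "S \<subseteq> T"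
  shows "T = S \<or> T = UNIV"
proof (cases "T \<subseteq> S")
  case False
  then obtain w where w: "w \<in> T" "w \<notin> S"
    by blast
  have "v \<in> T" if "v \<notin> S" for v
  proof -
    have "v - w \<in> T"
      using assms that w unfolding index_le_two_def by blast
    then show ?thesis
      using add_subgroup_add[OF assms(2) _ w(1), of "v - w"] by simp
  qed
  then show ?thesis
    using assms(3) by blast
qed (use assms(3) in blast)

lemma add_subgroup_union_coset:
  fixes S :: "'a::ab_group_add set"
  assumes exp2: "\<And>x::'a. - x = x" and sub: "add_subgroup S"
  shows "add_subgroup {x. \<exists>e\<in>{0, u}. x - e \<in> S}"
  unfolding add_subgroup_def
proof (intro conjI ballI)
  show "0 \<in> {x. \<exists>e\<in>{0, u}. x - e \<in> S}"
    using add_subgroup_0[OF sub] by auto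
  fix x y assume "x \<in> {x. \<exists>e\<in>{0, u}. x - e \<in> S}" "y \<in> {x. \<exists>e\<in>{0, u}. x - e \<in> S}"
  then obtain e1 e2 where e: "e1 \<in> {0, u}" "e2 \<in> {0, u}" and "x - e1 \<in> S" "y - e2 \<in> S"
    by blast
  then have "(x - y) - (e1 - e2) \<in> S"
    using add_subgroup_diff[OF sub, of "x - e1" "y - e2"] by (simp add: algebra_simps)
  moreover have "e1 - e2 \<in> {0, u}"
    using e exp2[of u] by auto
  ultimately show "x - y \<in> {x. \<exists>e\<in>{0, u}. x - e \<in> S}"
    by blast
qed

lemma index_le_two_if_maximal:
  fixes S :: "'a::ab_group_add set"
  assumes exp2: "\<And>x::'a. - x = x" and sub: "add_subgroup S" and "S \<noteq> UNIV"
    and max: "\<And>T. add_subgroup T \<Longrightarrow> S \<subseteq> T \<Longrightarrow> T = S \<or> T = UNIV"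
  shows "index_le_two S"
proof -
  obtain u where u: "u \<notin> S"
    using assms(3) by blast
  let ?T = "{x. \<exists>e\<in>{0, u}. x - e \<in> S}"
  have "S \<subseteq> ?T" and "u \<in> ?T"
    using add_subgroup_0[OF sub] by auto
  then have "?T = UNIV"
    using max[OF add_subgroup_union_coset[OF exp2 sub]] u by blast
  then have "v - u \<in> S" if "v \<notin> S" for v
    using that by auto
  then show ?thesis
    using index_le_two_if_complement_coset[OF sub u] by blast
qed

definition sign_vector :: "'a::finite set \<Rightarrow> real ^ 'a" where
  "sign_vector H = (\<chi> x. if x \<in> H then 1 else -1)"

lemma orthogonal_sign_vector:
  fixes H K :: "'a::{ab_group_add,finite} set"
  assumes "index_le_two H" and "index_le_two K" and "H \<noteq> K"
  shows "orthogonal (sign_vector H) (sign_vector K)"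
proof -
  define \<psi> where "\<psi> x = (if x \<in> H \<longleftrightarrow> x \<in> K then 1 else -1 :: real)" for x
  have hom: "\<psi> (x - y) = \<psi> x * \<psi> y" for x y
  proof -
    have "x - y \<in> H \<longleftrightarrow> (x \<in> H \<longleftrightarrow> y \<in> H)" "x - y \<in> K \<longleftrightarrow> (x \<in> K \<longleftrightarrow> y \<in> K)"
      using assms(1,2) unfolding index_le_two_def by blast+
    then show ?thesis
      unfolding \<psi>_def by auto
  qed
  obtain y where "y \<in> H \<longleftrightarrow> y \<notin> K"
    using assms(3) by blast
  then have y: "\<psi> y = -1"
    by (simp add: \<psi>_def)
  have "(\<Sum>x\<in>UNIV. \<psi> x) = (\<Sum>x\<in>UNIV. \<psi> (x - y))"
    by (rule sum.reindex_bij_witness[of _ "\<lambda>x. x - y" "\<lambda>x. x + y"]) auto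
  also have "\<dots> = - (\<Sum>x\<in>UNIV. \<psi> x)"
    by (simp add: hom y sum_negf)
  finally have "(\<Sum>x\<in>UNIV. \<psi> x) = 0"
    by simp
  moreover have "sign_vector H \<bullet> sign_vector K = (\<Sum>x\<in>UNIV. \<psi> x)"
    unfolding inner_vec_def sign_vector_def \<psi>_def by (intro sum.cong) auto
  ultimately show ?thesis
    by (simp add: orthogonal_def)
qed

lemma sign_vector_neq_0: "sign_vector H \<noteq> 0"
proof
  assume "sign_vector H = 0"
  then have "sign_vector H $ undefined = 0"
    by simp
  then show False
    by (simp add: sign_vector_def split: if_splits)
qed

lemma card_index_le_two_le_CARD:
  "card {H :: 'a::{ab_group_add,finite} set. index_le_two H} \<le> CARD('a)"
proof -
  let ?M = "{H :: 'a set. index_le_two H}"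
  have "inj_on sign_vector ?M"
  proof (rule inj_onI)
    fix H K
    assume "H \<in> ?M" "K \<in> ?M" and eq: "sign_vector H = sign_vector K"
    have "x \<in> H \<longleftrightarrow> x \<in> K" for x
      using arg_cong[OF eq, of "\<lambda>v. v $ x"] by (simp add: sign_vector_def split: if_splits)
    then show "H = K"
      by blast
  qed
  then have "card (sign_vector ` ?M) = card ?M"
    by (rule card_image)
  moreover have "pairwise orthogonal (sign_vector ` ?M)"
    by (auto simp: pairwise_def intro!: orthogonal_sign_vector)
  moreover have "0 \<notin> sign_vector ` ?M"
    using sign_vector_neq_0 by (metis imageE)
  ultimately have "independent (sign_vector ` ?M)"
    using pairwise_orthogonal_independent by blast
  then show ?thesis
    using independent_bound \<open>card (sign_vector ` ?M) = card ?M\<close> by fastforce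
qed

lemma card_kernel_mult_card_range:
  fixes f :: "'a::{ab_group_add,finite} \<Rightarrow> 'b::ab_group_add"
  assumes hom: "\<And>x y. f (x - y) = f x - f y"
  shows "card {x. f x = 0} * card (range f) = CARD('a)"
proof -
  have fibre: "{x. f x = f c} = (+) c ` {x. f x = 0}" for c
  proof (rule Set.set_eqI, rule iffI)
    fix x assume "x \<in> {x. f x = f c}"
    then have "x - c \<in> {x. f x = 0}"
      by (simp add: hom)
    then show "x \<in> (+) c ` {x. f x = 0}"
      by (rule image_eqI[rotated]) simp
  next
    fix x assume "x \<in> (+) c ` {x. f x = 0}"
    then obtain k where "f k = 0" "x = c + k"
      by blast
    then show "x \<in> {x. f x = f c}"
      using hom[of "c + k" c] by simp
  qed
  have "CARD('a) = card (\<Union>y\<in>range f. {x. f x = y})"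
    by (rule arg_cong[where f = card]) blast
  also have "\<dots> = (\<Sum>y\<in>range f. card {x. f x = y})"
    by (rule card_UN_disjoint) auto
  also have "\<dots> = (\<Sum>y\<in>range f. card {x. f x = 0})"
    by (rule sum.cong) (auto simp: fibre card_image)
  finally show ?thesis
    by simp
qed

text \<open>\<open>(0, comm_form t a c)\<close> is the commutator of \<open>(a, b)\<close> and \<open>(c, d)\<close> in \<open>A_grp t\<close>; in
  characteristic 2 this is the form \<open>a c\<^sup>\<theta> + c a\<^sup>\<theta>\<close> of the paper.\<close>
definition comm_form :: "('a::field \<Rightarrow> 'a) \<Rightarrow> 'a \<Rightarrow> 'a \<Rightarrow> 'a" where
  "comm_form t a c = a * t c - c * t a"

lemma comm_form_diff:
  "field_aut t \<Longrightarrow> comm_form t a (c - d) = comm_form t a c - comm_form t a d"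
  by (simp add: comm_form_def field_aut_diff algebra_simps)

lemma comm_form_eq_0_iff:
  assumes aut: "field_aut t" and "a \<noteq> 0"
  shows "comm_form t a c = 0 \<longleftrightarrow> t (c / a) = c / a"
proof -
  have "t a \<noteq> 0"
    using aut assms(2) field_aut_eq_0_iff by blast
  then show ?thesis
    using assms(2) by (auto simp: comm_form_def field_aut_divide[OF aut] field_simps)
qed

lemma card_range_comm_form:
  fixes t :: "'a::{field,finite} \<Rightarrow> 'a"
  assumes "CHAR('a) = 2" and gen: "gal_generator t" and "a \<noteq> 0"
  shows "CARD('a) = 2 * card (range (comm_form t a))"
proof -
  have aut: "field_aut t"
    using gen gal_generator_def by blast
  have "c / a = 0 \<or> c / a = 1 \<longleftrightarrow> c = 0 \<or> c = a" for c
    using assms(3) by auto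
  then have "{c. comm_form t a c = 0} = {0, a}"
    using comm_form_eq_0_iff[OF aut assms(3)] gal_generator_fixed_iff[OF assms(1,2)] by auto
  then show ?thesis
    using card_kernel_mult_card_range[of "comm_form t a"] comm_form_diff[OF aut] assms(3) by simp
qed

lemma index_le_two_range_comm_form:
  fixes t :: "'a::{field,finite} \<Rightarrow> 'a"
  assumes "CHAR('a) = 2" and gen: "gal_generator t" and "a \<noteq> 0"
  shows "index_le_two (range (comm_form t a))" and "range (comm_form t a) \<noteq> UNIV"
proof -
  have aut: "field_aut t"
    using gen gal_generator_def by blast
  have card: "CARD('a) = 2 * card (range (comm_form t a))"
    using card_range_comm_form[OF assms] .
  show "index_le_two (range (comm_form t a))"
    using index_le_two_if_card_eq[OF add_subgroup_range card] comm_form_diff[OF aut] by blast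
  show "range (comm_form t a) \<noteq> UNIV"
    using card by auto
qed

lemma range_comm_form_eq_image_mult:
  assumes aut: "field_aut t" and "a \<noteq> 0"
  shows "range (comm_form t a) = (\<lambda>w. a * t a * w) ` range (comm_form t 1)"
proof -
  have "surj (\<lambda>s. a * s)"
    by (rule surjI[of _ "\<lambda>s. s / a"]) (use assms(2) in simp)
  then have "range (comm_form t a) = range (\<lambda>s. comm_form t a (a * s))"
    by (simp add: range_composition)
  also have "(\<lambda>s. comm_form t a (a * s)) = (\<lambda>s. a * t a * comm_form t 1 s)"
    by (simp add: comm_form_def field_aut_mult[OF aut] aut algebra_simps)
  finally show ?thesis
    by (simp add: range_composition)
qed

lemma index_two_mult_invariant_eq_1:
  fixes W :: "'a::{field,finite} set"
  assumes idx: "index_le_two W" and "W \<noteq> UNIV" and "\<mu> \<noteq> 0"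
    and inv: "(\<lambda>w. \<mu> * w) ` W \<subseteq> W"
  shows "\<mu> = 1"
proof (rule ccontr)
  assume "\<mu> \<noteq> 1"
  have stable: "x \<in> W" if "k \<noteq> 0" "(\<lambda>w. k * w) ` W \<subseteq> W" "k * x \<in> W" for k x
  proof -
    have "card ((\<lambda>w. k * w) ` W) = card W"
      using that(1) by (simp add: card_image inj_on_def)
    then have "(\<lambda>w. k * w) ` W = W"
      using that(2) by (simp add: card_subset_eq)
    then show ?thesis
      using that(1,3) by (metis image_iff mult_left_cancel)
  qed
  have sub: "add_subgroup W"
    using idx by (rule index_le_two_imp_add_subgroup)
  have "(\<mu> - 1) * w \<in> W" if "w \<in> W" for w
    using inv that add_subgroup_diff[OF sub] by (auto simp: left_diff_distrib)
  then have inv': "(\<lambda>w. (\<mu> - 1) * w) ` W \<subseteq> W"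
    by blast
  obtain u where u: "u \<notin> W"
    using assms(2) by blast
  have "\<mu> * u \<notin> W"
    using stable[OF assms(3) inv] u by blast
  moreover have "(\<mu> - 1) * u \<notin> W"
    using stable[OF _ inv'] u \<open>\<mu> \<noteq> 1\<close> by force
  moreover have "\<mu> * u - u \<in> W"
    using idx calculation u unfolding index_le_two_def by blast
  ultimately show False
    by (simp add: left_diff_distrib)
qed

lemma range_comm_form_inj:
  fixes t :: "'a::{field,finite} \<Rightarrow> 'a"
  assumes card: "CARD('a) = 2 ^ n" and "odd n" and gen: "gal_generator t"
    and a: "a \<noteq> 0" and a': "a' \<noteq> 0" and eq: "range (comm_form t a) = range (comm_form t a')"
  shows "a = a'"
proof -
  have char: "CHAR('a) = 2"
    using CHAR_eq_2_if_CARD_eq_power_2[OF card] \<open>odd n\<close> by (simp add: odd_pos)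
  have aut: "field_aut t"
    using gen gal_generator_def by blast
  have "t a \<noteq> 0" "t a' \<noteq> 0"
    using a a' field_aut_eq_0_iff[OF aut] by auto
  define \<mu> where "\<mu> = (a * t a) / (a' * t a')"
  let ?W = "range (comm_form t 1)"
  have "(\<lambda>w. \<mu> * w) ` ?W \<subseteq> ?W"
  proof clarify
    fix c
    have "a * t a * comm_form t 1 c \<in> range (comm_form t a)"
      unfolding range_comm_form_eq_image_mult[OF aut a] by blast
    then have "a * t a * comm_form t 1 c \<in> (\<lambda>w. a' * t a' * w) ` ?W"
      unfolding eq range_comm_form_eq_image_mult[OF aut a'] .
    then obtain w where "w \<in> ?W" "a * t a * comm_form t 1 c = a' * t a' * w"
      by blast
    then show "\<mu> * comm_form t 1 c \<in> ?W"
      using a' \<open>t a' \<noteq> 0\<close> by (simp add: \<mu>_def field_simps)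
  qed
  moreover have "\<mu> \<noteq> 0"
    using a a' \<open>t a \<noteq> 0\<close> \<open>t a' \<noteq> 0\<close> by (simp add: \<mu>_def)
  ultimately have "\<mu> = 1"
    using index_two_mult_invariant_eq_1 index_le_two_range_comm_form[OF char gen one_neq_zero] by blast
  then have "t (a / a') * (a / a') = 1"
    using a' \<open>t a' \<noteq> 0\<close> by (simp add: \<mu>_def field_aut_divide[OF aut] field_simps)
  then have "a / a' = 1"
    by (rule gal_generator_norm_eq_1[OF card \<open>odd n\<close> gen])
  then show ?thesis
    using a' by simp
qed

lemma index_two_eq_range_comm_form:
  fixes t :: "'a::{field,finite} \<Rightarrow> 'a"
  assumes card: "CARD('a) = 2 ^ n" and "odd n" and gen: "gal_generator t"
    and "index_le_two S" and "S \<noteq> UNIV"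
  shows "\<exists>a. a \<noteq> 0 \<and> S = range (comm_form t a)"
proof -
  have char: "CHAR('a) = 2"
    using CHAR_eq_2_if_CARD_eq_power_2[OF card] \<open>odd n\<close> by (simp add: odd_pos)
  let ?R = "(\<lambda>a. range (comm_form t a)) ` (UNIV - {0})"
  let ?M = "{H :: 'a set. index_le_two H} - {UNIV}"
  have "inj_on (\<lambda>a. range (comm_form t a)) (UNIV - {0})"
    by (rule inj_onI) (use range_comm_form_inj[OF card \<open>odd n\<close> gen] in blast)
  then have card_R: "card ?R = CARD('a) - 1"
    by (simp add: card_image card_Diff_singleton)
  have fin_M: "finite ?M"
    by (rule finite_subset[of _ "Pow UNIV"]) simp_all
  have "card ?M = card {H :: 'a set. index_le_two H} - 1"
    by (rule card_Diff_singleton) (simp add: index_le_two_UNIV)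
  then have "card ?M \<le> CARD('a) - 1"
    using card_index_le_two_le_CARD[where 'a = 'a] by linarith
  moreover have "?R \<subseteq> ?M"
    using index_le_two_range_comm_form[OF char gen] by blast
  ultimately have "?R = ?M"
    using card_seteq[OF fin_M] card_R by simp
  then have "S \<in> ?R"
    using assms(4,5) by simp
  then show ?thesis
    by auto
qed

lemma A_grp_carrier [simp]: "carrier (A_grp t) = UNIV"
  by (simp add: A_grp_def)

lemma A_grp_one [simp]: "\<one>\<^bsub>A_grp t\<^esub> = (0, 0)"
  by (simp add: A_grp_def)

lemma A_grp_mult [simp]: "(a, b) \<otimes>\<^bsub>A_grp t\<^esub> (c, d) = (a + c, b + d + a * t c)"
  by (simp add: A_grp_def)

lemma group_A_grp:
  assumes aut: "field_aut t"
  shows "group (A_grp t)"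
proof (rule groupI)
  fix x y z :: "'a \<times> 'a"
  show "x \<otimes>\<^bsub>A_grp t\<^esub> y \<otimes>\<^bsub>A_grp t\<^esub> z = x \<otimes>\<^bsub>A_grp t\<^esub> (y \<otimes>\<^bsub>A_grp t\<^esub> z)"
    by (cases x, cases y, cases z) (simp add: field_aut_add[OF aut] algebra_simps)
  show "\<exists>y\<in>carrier (A_grp t). y \<otimes>\<^bsub>A_grp t\<^esub> x = \<one>\<^bsub>A_grp t\<^esub>"
  proof (cases x)
    case (Pair a b)
    show ?thesis
      by (rule bexI[of _ "(- a, a * t a - b)"]) (simp_all add: Pair field_aut_add[OF aut])
  qed
qed auto

lemma A_grp_inv:
  assumes aut: "field_aut t"
  shows "inv\<^bsub>A_grp t\<^esub> (a, b) = (- a, a * t a - b)"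
  by (rule group.inv_equality[OF group_A_grp[OF aut]]) simp_all

lemma A_grp_commutator:
  assumes aut: "field_aut t"
  shows "inv\<^bsub>A_grp t\<^esub> (a, b) \<otimes>\<^bsub>A_grp t\<^esub> inv\<^bsub>A_grp t\<^esub> (c, d) \<otimes>\<^bsub>A_grp t\<^esub> (a, b) \<otimes>\<^bsub>A_grp t\<^esub> (c, d)
    = (0, comm_form t a c)"
  by (simp add: A_grp_inv[OF aut] comm_form_def field_aut_add[OF aut] field_aut_minus[OF aut]
      algebra_simps)

lemma center_A_grp:
  assumes aut: "field_aut t" and "t \<noteq> id"
  shows "center (A_grp t) = {0} \<times> UNIV"
proof -
  obtain c where c: "t c \<noteq> c"
    using assms(2) by (metis eq_id_iff)
  have "(\<forall>c. a * t c = c * t a) \<longleftrightarrow> a = 0" for a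
  proof
    assume comm: "\<forall>c. a * t c = c * t a"
    then have "t a = a"
      using comm[rule_format, of 1] aut by simp
    then have "a * (t c - c) = 0"
      using comm[rule_format, of c] by (simp add: algebra_simps)
    then show "a = 0"
      using c by simp
  qed (simp add: aut)
  moreover have "(a, b) \<in> center (A_grp t) \<longleftrightarrow> (\<forall>c. a * t c = c * t a)" for a b
    by (auto simp: center_def algebra_simps)
  ultimately show ?thesis
    by auto
qed

lemma subgroup_A_grp_zero_Times_iff:
  fixes t :: "'a::field \<Rightarrow> 'a"
  assumes aut: "field_aut t"
  shows "subgroup ({0} \<times> S) (A_grp t) \<longleftrightarrow> add_subgroup S"
proof
  assume sub: "subgroup ({0} \<times> S) (A_grp t)"
  have "x - y \<in> S" if "x \<in> S" "y \<in> S" for x y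
  proof -
    have "(0, x) \<otimes>\<^bsub>A_grp t\<^esub> inv\<^bsub>A_grp t\<^esub> (0, y) \<in> {0} \<times> S"
      using that by (intro subgroup.m_closed[OF sub] subgroup.m_inv_closed[OF sub]) simp_all
    then show ?thesis
      by (simp add: A_grp_inv[OF aut])
  qed
  moreover have "0 \<in> S"
    using subgroup.one_closed[OF sub] by simp
  ultimately show "add_subgroup S"
    by (simp add: add_subgroup_def)
next
  assume sub: "add_subgroup S"
  show "subgroup ({0} \<times> S) (A_grp t)"
  proof (rule group.subgroupI[OF group_A_grp[OF aut]])
    show "{0} \<times> S \<noteq> {}"
      using add_subgroup_0[OF sub] by blast
    fix p q :: "'a \<times> 'a"
    assume "p \<in> {0} \<times> S" "q \<in> {0} \<times> S"
    then show "inv\<^bsub>A_grp t\<^esub> p \<in> {0} \<times> S" and "p \<otimes>\<^bsub>A_grp t\<^esub> q \<in> {0} \<times> S"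
      using add_subgroup_minus[OF sub] add_subgroup_add[OF sub] by (auto simp: A_grp_inv[OF aut] aut)
  qed simp
qed

lemma comm_sub_A_grp:
  fixes t :: "'a::field \<Rightarrow> 'a"
  assumes aut: "field_aut t"
  shows "comm_sub (A_grp t) x = {0} \<times> range (comm_form t (fst x))"
proof -
  obtain a b where x: "x = (a, b)"
    by fastforce
  have "{inv\<^bsub>A_grp t\<^esub> x \<otimes>\<^bsub>A_grp t\<^esub> inv\<^bsub>A_grp t\<^esub> g \<otimes>\<^bsub>A_grp t\<^esub> x \<otimes>\<^bsub>A_grp t\<^esub> g
      | g. g \<in> carrier (A_grp t)} = {0} \<times> range (comm_form t a)"
    (is "?C = ?Z")
  proof
    show "?C \<subseteq> ?Z"
    proof
      fix p assume "p \<in> ?C"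
      then obtain c d where "p = inv\<^bsub>A_grp t\<^esub> (a, b) \<otimes>\<^bsub>A_grp t\<^esub> inv\<^bsub>A_grp t\<^esub> (c, d)
          \<otimes>\<^bsub>A_grp t\<^esub> (a, b) \<otimes>\<^bsub>A_grp t\<^esub> (c, d)"
        unfolding x by auto
      then show "p \<in> ?Z"
        unfolding A_grp_commutator[OF aut] by blast
    qed
    show "?Z \<subseteq> ?C"
    proof
      fix p :: "'a \<times> 'a"
      assume "p \<in> ?Z"
      then obtain c where p: "p = (0, comm_form t a c)"
        by blast
      have "p = inv\<^bsub>A_grp t\<^esub> (a, b) \<otimes>\<^bsub>A_grp t\<^esub> inv\<^bsub>A_grp t\<^esub> (c, 0)
          \<otimes>\<^bsub>A_grp t\<^esub> (a, b) \<otimes>\<^bsub>A_grp t\<^esub> (c, 0)"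
        unfolding p by (rule A_grp_commutator[OF aut, symmetric])
      then show "p \<in> ?C"
        unfolding x A_grp_carrier by blast
    qed
  qed
  moreover have "add_subgroup (range (comm_form t a))"
    by (rule add_subgroup_range) (rule comm_form_diff[OF aut])
  then have "subgroup ?Z (A_grp t)"
    by (simp add: subgroup_A_grp_zero_Times_iff[OF aut])
  ultimately show ?thesis
    unfolding comm_sub_def x fst_conv
    using group.generate_subgroup_incl[OF group_A_grp[OF aut] order_refl] generate.incl
    by (metis subsetI subset_antisym)
qed

lemma l_coset_A_grp_center:
  fixes t :: "'a::field \<Rightarrow> 'a"
  assumes aut: "field_aut t"
  shows "x <#\<^bsub>A_grp t\<^esub> ({0} \<times> UNIV) = {fst x} \<times> UNIV"
proof -
  obtain a b where x: "x = (a, b)"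
    by fastforce
  have "x <#\<^bsub>A_grp t\<^esub> ({0} \<times> UNIV) = (\<lambda>e. (a, b + e)) ` UNIV"
    unfolding l_coset_def x using aut by auto
  also have "\<dots> = {a} \<times> UNIV"
  proof
    show "{a} \<times> UNIV \<subseteq> (\<lambda>e. (a, b + e)) ` UNIV"
    proof
      fix p :: "'a \<times> 'a"
      assume "p \<in> {a} \<times> UNIV"
      then obtain d where "p = (a, d)"
        by blast
      then show "p \<in> (\<lambda>e. (a, b + e)) ` UNIV"
        by (intro image_eqI[of _ _ "d - b"]) simp_all
    qed
  qed blast
  finally show ?thesis
    unfolding x by simp
qed

lemma maximal_subgroup_of_A_grp_center_iff:
  fixes t :: "'a::field \<Rightarrow> 'a"
  assumes aut: "field_aut t" and exp2: "\<And>x::'a. - x = x"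
  shows "maximal_subgroup_of H ({0} \<times> UNIV) (A_grp t) \<longleftrightarrow>
    (\<exists>S. H = {0} \<times> S \<and> index_le_two S \<and> S \<noteq> UNIV)"
proof
  assume max: "maximal_subgroup_of H ({0} \<times> UNIV) (A_grp t)"
  then have "H = {0} \<times> snd ` H"
    unfolding maximal_subgroup_of_def by force
  then obtain S where H: "H = {0} \<times> S"
    by blast
  have sub: "add_subgroup S" and neq: "S \<noteq> UNIV"
    using max subgroup_A_grp_zero_Times_iff[OF aut] unfolding H maximal_subgroup_of_def by auto
  have "T = S \<or> T = UNIV" if T: "add_subgroup T" "S \<subseteq> T" for T
  proof -
    have "subgroup ({0} \<times> T) (A_grp t)"
      using T(1) subgroup_A_grp_zero_Times_iff[OF aut] by blast
    moreover have "H \<subseteq> {0} \<times> T"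
      unfolding H using T(2) by blast
    ultimately have "{0} \<times> T = {0} \<times> S \<or> {0} \<times> T = {0} \<times> (UNIV :: 'a set)"
      using max unfolding H maximal_subgroup_of_def by blast
    then show ?thesis
      by (auto simp: times_eq_iff)
  qed
  then have "index_le_two S"
    using index_le_two_if_maximal[OF exp2 sub neq] by blast
  then show "\<exists>S. H = {0} \<times> S \<and> index_le_two S \<and> S \<noteq> UNIV"
    using H neq by blast
next
  assume "\<exists>S. H = {0} \<times> S \<and> index_le_two S \<and> S \<noteq> UNIV"
  then obtain S where H: "H = {0} \<times> S" and idx: "index_le_two S" and "S \<noteq> UNIV"
    by blast
  have sub: "add_subgroup S"
    using idx by (rule index_le_two_imp_add_subgroup)
  show "maximal_subgroup_of H ({0} \<times> UNIV) (A_grp t)"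
    unfolding maximal_subgroup_of_def
  proof (intro conjI allI impI)
    show "subgroup H (A_grp t)"
      unfolding H using subgroup_A_grp_zero_Times_iff[OF aut] sub by blast
    show "H \<subseteq> {0} \<times> UNIV"
      unfolding H by blast
    show "H \<noteq> {0} \<times> UNIV"
      unfolding H using \<open>S \<noteq> UNIV\<close> by (simp add: times_eq_iff)
    fix L assume L: "subgroup L (A_grp t) \<and> H \<subseteq> L \<and> L \<subseteq> {0} \<times> UNIV"
    then have "L = {0} \<times> snd ` L"
      by force
    then obtain T where LT: "L = {0} \<times> T"
      by blast
    have "add_subgroup T" "S \<subseteq> T"
      using L subgroup_A_grp_zero_Times_iff[OF aut] unfolding LT H by auto
    then show "L = H \<or> L = {0} \<times> UNIV"
      unfolding LT H using index_le_two_maximal[OF idx] by blast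
  qed
qed

theorem lemma3p1:
  fixes \<theta> :: "'a::{field, finite} \<Rightarrow> 'a" and n :: nat
  assumes "card (UNIV :: 'a set) = 2 ^ n" and "odd n" and "n \<ge> 3"
    and "gal_generator \<theta>"
  defines "G \<equiv> A_grp \<theta>"
  shows "(\<forall>x \<in> carrier G - center G.
            maximal_subgroup_of (comm_sub G x) (center G) G
            \<and> card (center G) = 2 * card (comm_sub G x))
       \<and> (\<forall>H. maximal_subgroup_of H (center G) G \<longrightarrow>
            (\<exists>x \<in> carrier G - center G. H = comm_sub G x))
       \<and> (\<forall>x \<in> carrier G - center G. \<forall>x' \<in> carrier G - center G.
            comm_sub G x = comm_sub G x' \<longleftrightarrow> x <#\<^bsub>G\<^esub> center G = x' <#\<^bsub>G\<^esub> center G)"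
proof -
  note card = assms(1) and gen = assms(4)
  have aut: "field_aut \<theta>"
    using gen gal_generator_def by blast
  have char: "CHAR('a) = 2"
    using CHAR_eq_2_if_CARD_eq_power_2[OF card] assms(3) by simp
  have "(2::nat) ^ 3 \<le> 2 ^ n"
    using assms(3) by (rule power_increasing) simp
  then have Z: "center G = {0} \<times> UNIV"
    unfolding G_def using center_A_grp[OF aut] gal_generator_neq_id[OF char gen] card by simp
  have noncentral: "x \<in> carrier G - center G \<longleftrightarrow> fst x \<noteq> 0" for x
    unfolding Z by (cases x) (auto simp: G_def)
  have comm: "comm_sub G x = {0} \<times> range (comm_form \<theta> (fst x))" for x
    unfolding G_def by (rule comm_sub_A_grp[OF aut])
  have max: "maximal_subgroup_of H (center G) G \<longleftrightarrow> (\<exists>S. H = {0} \<times> S \<and> index_le_two S \<and> S \<noteq> UNIV)"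
    for H
    unfolding Z unfolding G_def by (rule maximal_subgroup_of_A_grp_center_iff[OF aut uminus_CHAR_2[OF char]])
  show ?thesis
  proof (intro conjI ballI allI impI)
    fix x assume "x \<in> carrier G - center G"
    then have "fst x \<noteq> 0"
      using noncentral by blast
    then have "index_le_two (range (comm_form \<theta> (fst x)))" "range (comm_form \<theta> (fst x)) \<noteq> UNIV"
      by (rule index_le_two_range_comm_form[OF char gen])+
    then show "maximal_subgroup_of (comm_sub G x) (center G) G"
      unfolding max comm by blast
  next
    fix x assume "x \<in> carrier G - center G"
    then have "fst x \<noteq> 0"
      using noncentral by blast
    then show "card (center G) = 2 * card (comm_sub G x)"
      using card_range_comm_form[OF char gen] unfolding comm Z by (simp add: card_cartesian_product)
  next
    fix H assume "maximal_subgroup_of H (center G) G"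
    then obtain S where H: "H = {0} \<times> S" and "index_le_two S" "S \<noteq> UNIV"
      unfolding max by blast
    then obtain a where "a \<noteq> 0" "S = range (comm_form \<theta> a)"
      using index_two_eq_range_comm_form[OF card assms(2) gen] by blast
    then have "H = comm_sub G (a, 0)" "(a, 0) \<in> carrier G - center G"
      unfolding H comm noncentral by simp_all
    then show "\<exists>x \<in> carrier G - center G. H = comm_sub G x"
      by blast
  next
    fix x x' assume "x \<in> carrier G - center G" "x' \<in> carrier G - center G"
    then have "fst x \<noteq> 0" "fst x' \<noteq> 0"
      using noncentral by blast+
    then show "comm_sub G x = comm_sub G x' \<longleftrightarrow> x <#\<^bsub>G\<^esub> center G = x' <#\<^bsub>G\<^esub> center G"
      using range_comm_form_inj[OF card assms(2) gen]
      unfolding comm Z unfolding G_def l_coset_A_grp_center[OF aut] by (auto simp: times_eq_iff)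
  qed
qed

end
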